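(* Let $\varepsilon>0$ and $a\geq 0$ with $a+\varepsilon\leq 1$. If $\omega(1,1,a)=r$, then $\omega(1,1-\varepsilon,a+\varepsilon)\leq r$.
   Context: $\omega(x_1,x_2,x_3)$ denotes the exponent of rectangular matrix multiplication: multiplying an $n^{x_1}\times n^{x_2}$ matrix by an $n^{x_2}\times n^{x_3}$ matrix takes $n^{\omega(x_1,x_2,x_3)+o(1)}$ time (equivalently, arithmetic operations / tensor rank exponent). It is invariant under permuting its three arguments. *)

theory Defs
  imports Complex_Main
begin

definition bilinear_mm_alg :: "nat \<Rightarrow> nat \<Rightarrow> nat \<Rightarrow> nat \<Rightarrow> bool" where
  "bilinear_mm_alg p q s r \<longleftrightarrow>
     (\<exists>(u :: nat \<Rightarrow> nat \<Rightarrow> nat \<Rightarrow> complex) (v :: nat \<Rightarrow> nat \<Rightarrow> nat \<Rightarrow> complex)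
        (w :: nat \<Rightarrow> nat \<Rightarrow> nat \<Rightarrow> complex).
       \<forall>(A :: nat \<Rightarrow> nat \<Rightarrow> complex) (B :: nat \<Rightarrow> nat \<Rightarrow> complex) i l.
         i < p \<longrightarrow> l < s \<longrightarrow>
         (\<Sum>k<q. A i k * B k l) =
         (\<Sum>t<r. (\<Sum>j<p. \<Sum>k<q. u t j k * A j k) *
                  (\<Sum>j<q. \<Sum>k<s. v t j k * B j k) * w t i l))"

definition mm_rank :: "nat \<Rightarrow> nat \<Rightarrow> nat \<Rightarrow> nat" where
  "mm_rank p q s = (LEAST r. bilinear_mm_alg p q s r)"

definition omega :: "real \<Rightarrow> real \<Rightarrow> real \<Rightarrow> real" where
  "omega x1 x2 x3 = Inf {\<tau>. \<exists>C. \<forall>\<^sub>F n in sequentially.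
      real (mm_rank (nat \<lceil>real n powr x1\<rceil>) (nat \<lceil>real n powr x2\<rceil>) (nat \<lceil>real n powr x3\<rceil>))
        \<le> C * real n powr \<tau>}"

end

theory Submission
  imports Defs
begin

text \<open>With \<open>\<theta> = (1 - \<epsilon> - a) / (1 - a)\<close> the shape \<open>(1, 1 - \<epsilon>, a + \<epsilon>)\<close> is the convex
combination \<open>\<theta> (1, 1, a) + (1 - \<theta>) (1, a, 1)\<close>, and \<open>(1, a, 1)\<close> is a cyclic rotation of
\<open>(1, 1, a)\<close>. Write \<open>n \<le> N\<^sub>1 N\<^sub>2\<close> with \<open>N\<^sub>1 = \<lceil>n powr \<theta>\<rceil>\<close> and \<open>N\<^sub>2 = \<lceil>n powr (1 - \<theta>)\<rceil>\<close>. Then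
multiplying an \<open>n \<times> n powr (1 - \<epsilon>)\<close> by an \<open>n powr (1 - \<epsilon>) \<times> n powr (a + \<epsilon>)\<close> matrix is a
restriction of the Kronecker product of the formats of shape \<open>(1, 1, a)\<close> at size \<open>N\<^sub>1\<close> and of
shape \<open>(1, a, 1)\<close> at size \<open>N\<^sub>2\<close>. Tensor rank is monotone under restriction, submultiplicative
under Kronecker products and invariant under rotation, so a rank bound \<open>O(n powr \<tau>)\<close> on shape
\<open>(1, 1, a)\<close> gives the bound \<open>O(N\<^sub>1 powr \<tau> * N\<^sub>2 powr \<tau>) = O(n powr \<tau>)\<close> on the new shape.\<close>

text \<open>The right-hand side is the coefficient of \<open>A j k * B k' l'\<close> in entry \<open>(i, l)\<close> of the
product \<open>A B\<close>: comparing coefficients in \<^const>\<open>bilinear_mm_alg\<close> turns an algorithm of length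
\<open>r\<close> into a decomposition of the matrix multiplication tensor into \<open>r\<close> rank-one tensors.\<close>

definition mm_decomp :: "nat \<Rightarrow> nat \<Rightarrow> nat \<Rightarrow> nat \<Rightarrow> bool" where
  "mm_decomp p q s r \<longleftrightarrow> (\<exists>u v w :: nat \<Rightarrow> nat \<Rightarrow> nat \<Rightarrow> complex. \<forall>i j k k' l l'.
     i < p \<longrightarrow> j < p \<longrightarrow> k < q \<longrightarrow> k' < q \<longrightarrow> l < s \<longrightarrow> l' < s \<longrightarrow>
     (\<Sum>t<r. u t j k * v t k' l' * w t i l) = of_bool (j = i \<and> k = k' \<and> l' = l))"

lemma sum_lessThan_mult_of_bool_eq:
  fixes f :: "nat \<Rightarrow> 'a::semiring_1"
  assumes "k < n"
  shows "(\<Sum>y<n. f y * of_bool (y = k)) = f k"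
  using assms by simp

lemma bilinear_mm_alg_imp_mm_decomp:
  assumes "bilinear_mm_alg p q s r"
  shows "mm_decomp p q s r"
proof -
  obtain u v w :: "nat \<Rightarrow> nat \<Rightarrow> nat \<Rightarrow> complex" where alg: "\<And>A B i l. i < p \<Longrightarrow> l < s \<Longrightarrow>
      (\<Sum>k<q. A i k * B k l) =
      (\<Sum>t<r. (\<Sum>j<p. \<Sum>k<q. u t j k * A j k) * (\<Sum>j<q. \<Sum>k<s. v t j k * B j k) * w t i l)"
    using assms unfolding bilinear_mm_alg_def by blast
  show ?thesis
    unfolding mm_decomp_def
  proof (intro exI allI impI)
    fix i j k k' l l'
    assume "i < p" "j < p" "k < q" "k' < q" "l < s" "l' < s"
    define A :: "nat \<Rightarrow> nat \<Rightarrow> complex" where "A x y = of_bool (x = j) * of_bool (y = k)" for x y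
    define B :: "nat \<Rightarrow> nat \<Rightarrow> complex" where "B x y = of_bool (x = k') * of_bool (y = l')" for x y
    have "(\<Sum>y<q. A i y * B y l) =
        (\<Sum>y<q. (of_bool (i = j) * of_bool (y = k') * of_bool (l = l')) * of_bool (y = k))"
      unfolding A_def B_def by (simp only: mult_ac)
    also have "\<dots> = of_bool (j = i \<and> k = k' \<and> l' = l)"
      by (subst sum_lessThan_mult_of_bool_eq[OF \<open>k < q\<close>]) (auto simp del: of_bool_eq)
    finally show "(\<Sum>t<r. u t j k * v t k' l' * w t i l) = of_bool (j = i \<and> k = k' \<and> l' = l)"
      using alg[OF \<open>i < p\<close> \<open>l < s\<close>, of A B] \<open>j < p\<close> \<open>k < q\<close> \<open>k' < q\<close> \<open>l' < s\<close>
      by (simp add: A_def B_def mult.assoc[symmetric] sum_distrib_right[symmetric])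
  qed
qed

lemma mm_decomp_imp_bilinear_mm_alg:
  assumes "mm_decomp p q s r"
  shows "bilinear_mm_alg p q s r"
proof -
  obtain u v w :: "nat \<Rightarrow> nat \<Rightarrow> nat \<Rightarrow> complex" where decomp: "\<And>i j k k' l l'.
      i < p \<Longrightarrow> j < p \<Longrightarrow> k < q \<Longrightarrow> k' < q \<Longrightarrow> l < s \<Longrightarrow> l' < s \<Longrightarrow>
      (\<Sum>t<r. u t j k * v t k' l' * w t i l) = of_bool (j = i \<and> k = k' \<and> l' = l)"
    using assms unfolding mm_decomp_def by blast
  show ?thesis
    unfolding bilinear_mm_alg_def
  proof (intro exI allI impI)
    fix A B :: "nat \<Rightarrow> nat \<Rightarrow> complex" and i l
    assume "i < p" "l < s"
    have "(\<Sum>t<r. (\<Sum>j<p. \<Sum>k<q. u t j k * A j k) * (\<Sum>k'<q. \<Sum>l'<s. v t k' l' * B k' l') * w t i l) =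
        (\<Sum>t<r. \<Sum>j<p. \<Sum>k<q. \<Sum>k'<q. \<Sum>l'<s. A j k * B k' l' * (u t j k * v t k' l' * w t i l))"
      by (simp only: sum_distrib_right) (simp only: sum_distrib_left sum_distrib_right mult_ac)
    also have "\<dots> = (\<Sum>j<p. \<Sum>k<q. \<Sum>k'<q. \<Sum>l'<s. A j k * B k' l' * (\<Sum>t<r. u t j k * v t k' l' * w t i l))"
      by (simp only: sum_distrib_left sum.swap[of _ "{..<r}"])
    also have "\<dots> = (\<Sum>j<p. \<Sum>k<q. \<Sum>k'<q. \<Sum>l'<s. A j k * B k' l' * of_bool (j = i \<and> k = k' \<and> l' = l))"
      using \<open>i < p\<close> \<open>l < s\<close> by (intro sum.cong refl) (simp add: decomp)
    also have "\<dots> = (\<Sum>k<q. A i k * B k l)"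
      using \<open>i < p\<close> \<open>l < s\<close> by (simp add: of_bool_conj mult.assoc[symmetric] sum_distrib_right[symmetric])
    finally show "(\<Sum>k<q. A i k * B k l) =
        (\<Sum>t<r. (\<Sum>j<p. \<Sum>k<q. u t j k * A j k) * (\<Sum>j<q. \<Sum>k<s. v t j k * B j k) * w t i l)"
      by simp
  qed
qed

lemma bilinear_mm_alg_iff_mm_decomp: "bilinear_mm_alg p q s r \<longleftrightarrow> mm_decomp p q s r"
  using bilinear_mm_alg_imp_mm_decomp mm_decomp_imp_bilinear_mm_alg by blast

lemma mm_decomp_rotate:
  assumes "mm_decomp p q s r"
  shows "mm_decomp q s p r"
proof -
  obtain u v w :: "nat \<Rightarrow> nat \<Rightarrow> nat \<Rightarrow> complex" where decomp: "\<And>i j k k' l l'.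
      i < p \<Longrightarrow> j < p \<Longrightarrow> k < q \<Longrightarrow> k' < q \<Longrightarrow> l < s \<Longrightarrow> l' < s \<Longrightarrow>
      (\<Sum>t<r. u t j k * v t k' l' * w t i l) = of_bool (j = i \<and> k = k' \<and> l' = l)"
    using assms unfolding mm_decomp_def by blast
  show ?thesis
    unfolding mm_decomp_def
  proof (rule exI[of _ v], rule exI[of _ "\<lambda>t k' l'. w t l' k'"], rule exI[of _ "\<lambda>t i l. u t l i"],
      intro allI impI)
    fix i j k k' l l'
    assume "i < q" "j < q" "k < s" "k' < s" "l < p" "l' < p"
    then show "(\<Sum>t<r. v t j k * w t l' k' * u t l i) = of_bool (j = i \<and> k = k' \<and> l' = l)"
      using decomp[of l' l i j k' k] by (auto simp: mult_ac)
  qed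
qed

lemma mm_decomp_restrict:
  assumes "mm_decomp p q s r" and "p' \<le> p" and "q' \<le> q" and "s' \<le> s"
  shows "mm_decomp p' q' s' r"
proof -
  obtain u v w :: "nat \<Rightarrow> nat \<Rightarrow> nat \<Rightarrow> complex" where decomp: "\<And>i j k k' l l'.
      i < p \<Longrightarrow> j < p \<Longrightarrow> k < q \<Longrightarrow> k' < q \<Longrightarrow> l < s \<Longrightarrow> l' < s \<Longrightarrow>
      (\<Sum>t<r. u t j k * v t k' l' * w t i l) = of_bool (j = i \<and> k = k' \<and> l' = l)"
    using assms(1) unfolding mm_decomp_def by blast
  show ?thesis
    unfolding mm_decomp_def
    by (intro exI[of _ u] exI[of _ v] exI[of _ w] allI impI decomp) (use assms(2-4) in auto)
qed

lemma mm_decomp_unit: "mm_decomp p 1 1 p"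
  unfolding mm_decomp_def
  by (rule exI[of _ "\<lambda>t j k. of_bool (t = j)"], rule exI[of _ "\<lambda>t j k. 1"],
      rule exI[of _ "\<lambda>t i l. of_bool (t = i)"]) (auto simp del: of_bool_eq)

lemma sum_lessThan_mult_div_mod:
  fixes f :: "nat \<Rightarrow> nat \<Rightarrow> 'a::comm_monoid_add"
  shows "(\<Sum>t<m * n. f (t div n) (t mod n)) = (\<Sum>i<m. \<Sum>j<n. f i j)"
proof -
  have "i * n + j < m * n" if "i < m" "j < n" for i j
  proof -
    have "i * n + j < Suc i * n" using that by simp
    also have "\<dots> \<le> m * n" using that by (intro mult_le_mono1) simp
    finally show ?thesis .
  qed
  moreover have "t mod n < n" if "t < m * n" for t
    using that by (cases "n = 0") auto
  ultimately show ?thesis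
    unfolding sum.cartesian_product
    by (intro sum.reindex_bij_witness[where i = "\<lambda>(i, j). i * n + j" and j = "\<lambda>t. (t div n, t mod n)"])
       (auto simp: less_mult_imp_div_less mult.commute)
qed

lemma mm_decomp_kronecker:
  assumes "mm_decomp p1 q1 s1 r1" and "mm_decomp p2 q2 s2 r2"
  shows "mm_decomp (p1 * p2) (q1 * q2) (s1 * s2) (r1 * r2)"
proof -
  obtain u1 v1 w1 :: "nat \<Rightarrow> nat \<Rightarrow> nat \<Rightarrow> complex" where decomp1: "\<And>i j k k' l l'.
      i < p1 \<Longrightarrow> j < p1 \<Longrightarrow> k < q1 \<Longrightarrow> k' < q1 \<Longrightarrow> l < s1 \<Longrightarrow> l' < s1 \<Longrightarrow>
      (\<Sum>t<r1. u1 t j k * v1 t k' l' * w1 t i l) = of_bool (j = i \<and> k = k' \<and> l' = l)"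
    using assms(1) unfolding mm_decomp_def by blast
  obtain u2 v2 w2 :: "nat \<Rightarrow> nat \<Rightarrow> nat \<Rightarrow> complex" where decomp2: "\<And>i j k k' l l'.
      i < p2 \<Longrightarrow> j < p2 \<Longrightarrow> k < q2 \<Longrightarrow> k' < q2 \<Longrightarrow> l < s2 \<Longrightarrow> l' < s2 \<Longrightarrow>
      (\<Sum>t<r2. u2 t j k * v2 t k' l' * w2 t i l) = of_bool (j = i \<and> k = k' \<and> l' = l)"
    using assms(2) unfolding mm_decomp_def by blast
  have div_mod_eq_iff: "a div n = b div n \<and> a mod n = b mod n \<longleftrightarrow> a = b" for a b n :: nat
    by (metis div_mult_mod_eq)
  \<comment> \<open>pairs of indices \<open>(x, y)\<close> with \<open>y < n\<close> are encoded as \<open>x * n + y\<close>\<close>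
  define u where "u t j k = u1 (t div r2) (j div p2) (k div q2) * u2 (t mod r2) (j mod p2) (k mod q2)" for t j k
  define v where "v t j k = v1 (t div r2) (j div q2) (k div s2) * v2 (t mod r2) (j mod q2) (k mod s2)" for t j k
  define w where "w t j k = w1 (t div r2) (j div p2) (k div s2) * w2 (t mod r2) (j mod p2) (k mod s2)" for t j k
  show ?thesis
    unfolding mm_decomp_def
  proof (intro exI allI impI)
    fix i j k k' l l'
    assume "i < p1 * p2" "j < p1 * p2" "k < q1 * q2" "k' < q1 * q2" "l < s1 * s2" "l' < s1 * s2"
    moreover from this have "p2 > 0" "q2 > 0" "s2 > 0"
      by (auto intro!: Nat.gr0I)
    ultimately have bounds:
      "i div p2 < p1" "j div p2 < p1" "k div q2 < q1" "k' div q2 < q1" "l div s2 < s1" "l' div s2 < s1"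
      "i mod p2 < p2" "j mod p2 < p2" "k mod q2 < q2" "k' mod q2 < q2" "l mod s2 < s2" "l' mod s2 < s2"
      by (auto simp: less_mult_imp_div_less mult.commute)
    define c1 where "c1 x = u1 x (j div p2) (k div q2) * v1 x (k' div q2) (l' div s2) * w1 x (i div p2) (l div s2)" for x
    define c2 where "c2 y = u2 y (j mod p2) (k mod q2) * v2 y (k' mod q2) (l' mod s2) * w2 y (i mod p2) (l mod s2)" for y
    have "(\<Sum>t<r1 * r2. u t j k * v t k' l' * w t i l) = (\<Sum>x<r1. \<Sum>y<r2. c1 x * c2 y)"
      unfolding sum_lessThan_mult_div_mod[where f = "\<lambda>x y. c1 x * c2 y", symmetric]
      by (simp add: u_def v_def w_def c1_def c2_def mult_ac)
    also have "\<dots> = (\<Sum>x<r1. c1 x) * (\<Sum>y<r2. c2 y)"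
      by (simp add: sum_product)
    also have "\<dots> = of_bool (j div p2 = i div p2 \<and> k div q2 = k' div q2 \<and> l' div s2 = l div s2) *
        of_bool (j mod p2 = i mod p2 \<and> k mod q2 = k' mod q2 \<and> l' mod s2 = l mod s2)"
      unfolding c1_def c2_def using bounds by (simp only: decomp1 decomp2)
    also have "\<dots> = of_bool (j = i \<and> k = k' \<and> l' = l)"
      unfolding of_bool_conj[symmetric]
      by (intro arg_cong[where f = of_bool])
         (use div_mod_eq_iff[of j p2 i] div_mod_eq_iff[of k q2 k'] div_mod_eq_iff[of l' s2 l] in blast)
    finally show "(\<Sum>t<r1 * r2. u t j k * v t k' l' * w t i l) = of_bool (j = i \<and> k = k' \<and> l' = l)" .
  qed
qed

lemma mm_decomp_standard: "mm_decomp p q s (p * q * s)"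
  using mm_decomp_kronecker[OF mm_decomp_kronecker[OF mm_decomp_unit[of p]
      mm_decomp_rotate[OF mm_decomp_rotate[OF mm_decomp_unit[of q]]]]
      mm_decomp_rotate[OF mm_decomp_unit[of s]]]
  by simp

lemma mm_decomp_mm_rank: "mm_decomp p q s (mm_rank p q s)"
  unfolding mm_rank_def bilinear_mm_alg_iff_mm_decomp
  using mm_decomp_standard by (rule LeastI)

lemma mm_rank_le: "mm_decomp p q s r \<Longrightarrow> mm_rank p q s \<le> r"
  unfolding mm_rank_def bilinear_mm_alg_iff_mm_decomp by (rule Least_le)

lemma mm_rank_le_product: "mm_rank p q s \<le> p * q * s"
  by (rule mm_rank_le[OF mm_decomp_standard])

lemma mm_rank_mono: "p' \<le> p \<Longrightarrow> q' \<le> q \<Longrightarrow> s' \<le> s \<Longrightarrow> mm_rank p' q' s' \<le> mm_rank p q s"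
  by (rule mm_rank_le, rule mm_decomp_restrict[OF mm_decomp_mm_rank])

lemma mm_rank_mult_le: "mm_rank (p1 * p2) (q1 * q2) (s1 * s2) \<le> mm_rank p1 q1 s1 * mm_rank p2 q2 s2"
  by (rule mm_rank_le, rule mm_decomp_kronecker[OF mm_decomp_mm_rank mm_decomp_mm_rank])

lemma mm_rank_rotate_le: "mm_rank q s p \<le> mm_rank p q s"
  by (rule mm_rank_le, rule mm_decomp_rotate[OF mm_decomp_mm_rank])

lemma mm_rank_pos:
  assumes "p > 0" and "q > 0" and "s > 0"
  shows "mm_rank p q s > 0"
proof (rule ccontr)
  assume "\<not> mm_rank p q s > 0"
  then have "mm_decomp p q s 0"
    using mm_decomp_mm_rank[of p q s] by simp
  then show False
    using assms unfolding mm_decomp_def by force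
qed

definition mm_rank_powr :: "real \<Rightarrow> real \<Rightarrow> real \<Rightarrow> nat \<Rightarrow> nat" where
  "mm_rank_powr x1 x2 x3 n =
     mm_rank (nat \<lceil>real n powr x1\<rceil>) (nat \<lceil>real n powr x2\<rceil>) (nat \<lceil>real n powr x3\<rceil>)"

definition mm_rank_exponents :: "real \<Rightarrow> real \<Rightarrow> real \<Rightarrow> real set" where
  "mm_rank_exponents x1 x2 x3 =
     {\<tau>. \<exists>C. \<forall>\<^sub>F n in sequentially. real (mm_rank_powr x1 x2 x3 n) \<le> C * real n powr \<tau>}"

lemma omega_eq_Inf_mm_rank_exponents: "omega x1 x2 x3 = Inf (mm_rank_exponents x1 x2 x3)"
  unfolding omega_def mm_rank_exponents_def mm_rank_powr_def ..

lemma mm_rank_exponents_nonneg: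
  assumes "\<tau> \<in> mm_rank_exponents x1 x2 x3"
  shows "0 \<le> \<tau>"
proof (rule ccontr)
  assume "\<not> 0 \<le> \<tau>"
  obtain C where bound: "\<forall>\<^sub>F n in sequentially. real (mm_rank_powr x1 x2 x3 n) \<le> C * real n powr \<tau>"
    using assms unfolding mm_rank_exponents_def by blast
  have "((\<lambda>n. C * real n powr \<tau>) \<longlongrightarrow> 0) sequentially"
    using \<open>\<not> 0 \<le> \<tau>\<close> by (intro tendsto_mult_right_zero tendsto_neg_powr filterlim_real_sequentially) auto
  then have small: "\<forall>\<^sub>F n in sequentially. C * real n powr \<tau> < 1"
    by (rule order_tendstoD) simp
  have "\<forall>\<^sub>F n in sequentially. 1 \<le> mm_rank_powr x1 x2 x3 n"
    using eventually_gt_at_top[of 0]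
    by eventually_elim (simp add: mm_rank_powr_def Suc_le_eq mm_rank_pos)
  with bound small have "\<forall>\<^sub>F n in sequentially. False"
    by eventually_elim simp
  then show False
    by simp
qed

lemma bdd_below_mm_rank_exponents: "bdd_below (mm_rank_exponents x1 x2 x3)"
  using mm_rank_exponents_nonneg by (intro bdd_belowI[of _ 0]) blast

lemma nat_ceiling_le_double: "1 \<le> y \<Longrightarrow> real (nat \<lceil>y\<rceil>) \<le> 2 * y"
  by linarith

lemma sum_mem_mm_rank_exponents:
  assumes "0 \<le> x1" and "0 \<le> x2" and "0 \<le> x3"
  shows "x1 + x2 + x3 \<in> mm_rank_exponents x1 x2 x3"
  unfolding mm_rank_exponents_def
proof (intro CollectI exI[of _ 8] eventually_sequentiallyI[of 1])
  fix n :: nat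
  assume "1 \<le> n"
  then have dim_le: "real (nat \<lceil>real n powr x\<rceil>) \<le> 2 * real n powr x" if "0 \<le> x" for x
    using that by (intro nat_ceiling_le_double ge_one_powr_ge_zero) auto
  have "real (mm_rank_powr x1 x2 x3 n) \<le>
      real (nat \<lceil>real n powr x1\<rceil>) * real (nat \<lceil>real n powr x2\<rceil>) * real (nat \<lceil>real n powr x3\<rceil>)"
    unfolding mm_rank_powr_def using mm_rank_le_product by (simp only: of_nat_mult[symmetric] of_nat_le_iff)
  also have "\<dots> \<le> (2 * real n powr x1) * (2 * real n powr x2) * (2 * real n powr x3)"
    using assms by (intro mult_mono dim_le mult_nonneg_nonneg of_nat_0_le_iff) auto
  also have "\<dots> = 8 * real n powr (x1 + x2 + x3)"
    by (simp add: powr_add)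
  finally show "real (mm_rank_powr x1 x2 x3 n) \<le> 8 * real n powr (x1 + x2 + x3)" .
qed

lemma mm_rank_exponents_rotate:
  assumes "\<tau> \<in> mm_rank_exponents x1 x2 x3"
  shows "\<tau> \<in> mm_rank_exponents x2 x3 x1"
proof -
  obtain C where bound: "\<forall>\<^sub>F n in sequentially. real (mm_rank_powr x1 x2 x3 n) \<le> C * real n powr \<tau>"
    using assms unfolding mm_rank_exponents_def by blast
  have rotate_le: "real (mm_rank_powr x2 x3 x1 n) \<le> real (mm_rank_powr x1 x2 x3 n)" for n
    unfolding mm_rank_powr_def by (simp add: mm_rank_rotate_le)
  from bound have "\<forall>\<^sub>F n in sequentially. real (mm_rank_powr x2 x3 x1 n) \<le> C * real n powr \<tau>"
    by (elim eventually_mono) (erule order_trans[OF rotate_le])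
  then show ?thesis
    unfolding mm_rank_exponents_def by blast
qed

lemma omega_le_if_mm_rank_exponents_subset:
  assumes "mm_rank_exponents x1 x2 x3 \<noteq> {}"
    and "mm_rank_exponents x1 x2 x3 \<subseteq> mm_rank_exponents y1 y2 y3"
  shows "omega y1 y2 y3 \<le> omega x1 x2 x3"
  unfolding omega_eq_Inf_mm_rank_exponents
  by (rule cInf_superset_mono[OF assms(1) bdd_below_mm_rank_exponents assms(2)])

lemma eventually_powr_bound_imp_uniform_bound:
  fixes f :: "nat \<Rightarrow> real"
  assumes "\<forall>\<^sub>F n in sequentially. f n \<le> C * real n powr \<tau>" and "\<And>n. 0 \<le> f n"
  obtains D where "0 \<le> D" and "\<And>n. 1 \<le> n \<Longrightarrow> f n \<le> D * real n powr \<tau>"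
proof -
  obtain N where N: "\<And>n. N \<le> n \<Longrightarrow> f n \<le> C * real n powr \<tau>"
    using assms(1) unfolding eventually_sequentially by blast
  define S where "S = (\<Sum>m<N. f m / real m powr \<tau>)"
  have "0 \<le> S"
    unfolding S_def using assms(2) by (intro sum_nonneg) auto
  show ?thesis
  proof (rule that[of "max C 0 + S"])
    show "0 \<le> max C 0 + S"
      using \<open>0 \<le> S\<close> by linarith
    fix n :: nat
    assume "1 \<le> n"
    then have "0 < real n powr \<tau>"
      by simp
    show "f n \<le> (max C 0 + S) * real n powr \<tau>"
    proof (cases "N \<le> n")
      case True
      then have "f n \<le> C * real n powr \<tau>"
        by (rule N)
      also have "\<dots> \<le> (max C 0 + S) * real n powr \<tau>"
        using \<open>0 \<le> S\<close> \<open>0 < real n powr \<tau>\<close> by (intro mult_right_mono) auto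
      finally show ?thesis .
    next
      case False
      then have "f n / real n powr \<tau> \<le> S"
        unfolding S_def using assms(2) by (intro member_le_sum) auto
      then have "f n / real n powr \<tau> \<le> max C 0 + S"
        by linarith
      then show ?thesis
        using \<open>0 < real n powr \<tau>\<close> by (simp add: divide_le_eq)
    qed
  qed
qed

lemma nat_ceiling_powr_le:
  assumes "1 \<le> y"
  shows "real (nat \<lceil>y\<rceil>) powr \<tau> \<le> max 1 (2 powr \<tau>) * y powr \<tau>"
proof (cases "0 \<le> \<tau>")
  case True
  have "real (nat \<lceil>y\<rceil>) powr \<tau> \<le> (2 * y) powr \<tau>"
    using True assms by (intro powr_mono2 nat_ceiling_le_double) auto
  also have "\<dots> = 2 powr \<tau> * y powr \<tau>"
    by (rule powr_mult)
  also have "\<dots> \<le> max 1 (2 powr \<tau>) * y powr \<tau>"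
    by (intro mult_right_mono) auto
  finally show ?thesis .
next
  case False
  have "real (nat \<lceil>y\<rceil>) powr \<tau> \<le> y powr \<tau>"
    using False assms by (intro powr_mono2' real_nat_ceiling_ge) auto
  also have "\<dots> \<le> max 1 (2 powr \<tau>) * y powr \<tau>"
    using mult_right_mono[of 1 "max 1 (2 powr \<tau>)" "y powr \<tau>"] by simp
  finally show ?thesis .
qed

lemma nat_ceiling_powr_convex_le:
  assumes "0 \<le> x" and "0 \<le> y"
  shows "nat \<lceil>real n powr (\<theta> * x + (1 - \<theta>) * y)\<rceil> \<le>
    nat \<lceil>real (nat \<lceil>real n powr \<theta>\<rceil>) powr x\<rceil> * nat \<lceil>real (nat \<lceil>real n powr (1 - \<theta>)\<rceil>) powr y\<rceil>"
proof -
  have "real n powr (\<theta> * x + (1 - \<theta>) * y) = (real n powr \<theta>) powr x * (real n powr (1 - \<theta>)) powr y"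
    by (simp add: powr_add powr_powr)
  also have "\<dots> \<le> real (nat \<lceil>real n powr \<theta>\<rceil>) powr x * real (nat \<lceil>real n powr (1 - \<theta>)\<rceil>) powr y"
    using assms by (intro mult_mono powr_mono2 real_nat_ceiling_ge powr_ge_zero) auto
  also have "\<dots> \<le> real (nat \<lceil>real (nat \<lceil>real n powr \<theta>\<rceil>) powr x\<rceil>) *
      real (nat \<lceil>real (nat \<lceil>real n powr (1 - \<theta>)\<rceil>) powr y\<rceil>)"
    by (intro mult_mono real_nat_ceiling_ge powr_ge_zero of_nat_0_le_iff)
  finally show ?thesis
    by simp
qed

lemma mm_rank_powr_convex_le:
  assumes "0 \<le> x1" "0 \<le> x2" "0 \<le> x3" and "0 \<le> y1" "0 \<le> y2" "0 \<le> y3"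
  shows "mm_rank_powr (\<theta> * x1 + (1 - \<theta>) * y1) (\<theta> * x2 + (1 - \<theta>) * y2) (\<theta> * x3 + (1 - \<theta>) * y3) n \<le>
    mm_rank_powr x1 x2 x3 (nat \<lceil>real n powr \<theta>\<rceil>) * mm_rank_powr y1 y2 y3 (nat \<lceil>real n powr (1 - \<theta>)\<rceil>)"
  unfolding mm_rank_powr_def
  using assms by (intro order_trans[OF mm_rank_mono mm_rank_mult_le] nat_ceiling_powr_convex_le)

lemma mm_rank_exponents_convex:
  assumes "0 \<le> \<theta>" and "\<theta> \<le> 1"
    and "0 \<le> x1" "0 \<le> x2" "0 \<le> x3" and "0 \<le> y1" "0 \<le> y2" "0 \<le> y3"
    and "\<sigma> \<in> mm_rank_exponents x1 x2 x3" and "\<tau> \<in> mm_rank_exponents y1 y2 y3"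
  shows "\<theta> * \<sigma> + (1 - \<theta>) * \<tau> \<in>
    mm_rank_exponents (\<theta> * x1 + (1 - \<theta>) * y1) (\<theta> * x2 + (1 - \<theta>) * y2) (\<theta> * x3 + (1 - \<theta>) * y3)"
proof -
  obtain C1 C2 where
    bound1: "\<forall>\<^sub>F n in sequentially. real (mm_rank_powr x1 x2 x3 n) \<le> C1 * real n powr \<sigma>" and
    bound2: "\<forall>\<^sub>F n in sequentially. real (mm_rank_powr y1 y2 y3 n) \<le> C2 * real n powr \<tau>"
    using assms(9,10) unfolding mm_rank_exponents_def by blast
  obtain D1 where "0 \<le> D1"
    and D1: "\<And>m. 1 \<le> m \<Longrightarrow> real (mm_rank_powr x1 x2 x3 m) \<le> D1 * real m powr \<sigma>"
    using eventually_powr_bound_imp_uniform_bound[OF bound1 of_nat_0_le_iff] by blast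
  obtain D2 where "0 \<le> D2"
    and D2: "\<And>m. 1 \<le> m \<Longrightarrow> real (mm_rank_powr y1 y2 y3 m) \<le> D2 * real m powr \<tau>"
    using eventually_powr_bound_imp_uniform_bound[OF bound2 of_nat_0_le_iff] by blast
  define K1 K2 where "K1 = max 1 (2 powr \<sigma>)" and "K2 = max 1 (2 powr \<tau>)"
  show ?thesis
    unfolding mm_rank_exponents_def
  proof (intro CollectI exI[of _ "D1 * K1 * (D2 * K2)"] eventually_sequentiallyI[of 1])
    fix n :: nat
    assume "1 \<le> n"
    define N1 N2 where "N1 = nat \<lceil>real n powr \<theta>\<rceil>" and "N2 = nat \<lceil>real n powr (1 - \<theta>)\<rceil>"
    have "1 \<le> real n powr \<theta>" "1 \<le> real n powr (1 - \<theta>)"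
      using \<open>1 \<le> n\<close> assms(1,2) by (auto intro: ge_one_powr_ge_zero)
    then have "1 \<le> N1" "1 \<le> N2"
      unfolding N1_def N2_def by linarith+
    have ceiling_bound1: "real N1 powr \<sigma> \<le> K1 * real n powr (\<theta> * \<sigma>)"
      unfolding N1_def K1_def powr_powr[symmetric] using \<open>1 \<le> real n powr \<theta>\<close> by (rule nat_ceiling_powr_le)
    have ceiling_bound2: "real N2 powr \<tau> \<le> K2 * real n powr ((1 - \<theta>) * \<tau>)"
      unfolding N2_def K2_def powr_powr[symmetric] using \<open>1 \<le> real n powr (1 - \<theta>)\<close> by (rule nat_ceiling_powr_le)
    have "real (mm_rank_powr (\<theta> * x1 + (1 - \<theta>) * y1) (\<theta> * x2 + (1 - \<theta>) * y2) (\<theta> * x3 + (1 - \<theta>) * y3) n) \<le>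
        real (mm_rank_powr x1 x2 x3 N1) * real (mm_rank_powr y1 y2 y3 N2)"
      unfolding N1_def N2_def of_nat_mult[symmetric] of_nat_le_iff
      using assms(3-8) by (rule mm_rank_powr_convex_le)
    also have "\<dots> \<le> (D1 * real N1 powr \<sigma>) * (D2 * real N2 powr \<tau>)"
      using \<open>1 \<le> N1\<close> \<open>1 \<le> N2\<close> \<open>0 \<le> D1\<close> by (intro mult_mono D1 D2) auto
    also have "\<dots> \<le> (D1 * (K1 * real n powr (\<theta> * \<sigma>))) * (D2 * (K2 * real n powr ((1 - \<theta>) * \<tau>)))"
      using ceiling_bound1 ceiling_bound2 \<open>0 \<le> D1\<close> \<open>0 \<le> D2\<close>
      by (intro mult_mono mult_left_mono) (auto simp: K1_def)
    also have "\<dots> = D1 * K1 * (D2 * K2) * real n powr (\<theta> * \<sigma> + (1 - \<theta>) * \<tau>)"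
      by (simp add: powr_add mult_ac)
    finally show "real (mm_rank_powr (\<theta> * x1 + (1 - \<theta>) * y1) (\<theta> * x2 + (1 - \<theta>) * y2)
        (\<theta> * x3 + (1 - \<theta>) * y3) n) \<le> D1 * K1 * (D2 * K2) * real n powr (\<theta> * \<sigma> + (1 - \<theta>) * \<tau>)" .
  qed
qed

theorem theorem9:
  fixes \<epsilon> a r :: real
  assumes "\<epsilon> > 0" and "a \<ge> 0" and "a + \<epsilon> \<le> 1"
    and "omega 1 1 a = r"
  shows "omega 1 (1 - \<epsilon>) (a + \<epsilon>) \<le> r"
proof -
  define \<theta> where "\<theta> = (1 - \<epsilon> - a) / (1 - a)"
  have "a < 1"
    using assms(1,3) by linarith
  then have "0 \<le> \<theta>" "\<theta> \<le> 1"
    unfolding \<theta>_def using assms(1,3) by (auto simp: divide_le_eq)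
  have shape: "\<theta> * 1 + (1 - \<theta>) * 1 = 1" "\<theta> * 1 + (1 - \<theta>) * a = 1 - \<epsilon>" "\<theta> * a + (1 - \<theta>) * 1 = a + \<epsilon>"
    using \<open>a < 1\<close> unfolding \<theta>_def by (simp_all add: divide_simps) (simp_all add: algebra_simps)
  have "mm_rank_exponents 1 1 a \<noteq> {}"
    using sum_mem_mm_rank_exponents[of 1 1 a] assms(2) by auto
  moreover have "mm_rank_exponents 1 1 a \<subseteq> mm_rank_exponents 1 (1 - \<epsilon>) (a + \<epsilon>)"
  proof
    fix \<tau>
    assume "\<tau> \<in> mm_rank_exponents 1 1 a"
    from mm_rank_exponents_convex[OF \<open>0 \<le> \<theta>\<close> \<open>\<theta> \<le> 1\<close> _ _ _ _ _ _ this mm_rank_exponents_rotate[OF this]]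
    show "\<tau> \<in> mm_rank_exponents 1 (1 - \<epsilon>) (a + \<epsilon>)"
      using assms(2) by (simp only: shape) (simp add: algebra_simps)
  qed
  ultimately have "omega 1 (1 - \<epsilon>) (a + \<epsilon>) \<le> omega 1 1 a"
    by (rule omega_le_if_mm_rank_exponents_subset)
  then show ?thesis
    using assms(4) by simp
qed

end
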